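(* Let $G$ be a $P_5$-free graph and let $D=\{d_1,\dots,d_m\}\subseteq V(G)$. Define $X_1 := N(d_1)\setminus D$ and, for $i\in\{2,\dots,m\}$, $X_i := N(d_i)\setminus (X_1\cup\dots\cup X_{i-1}\cup D)$. Let $1\le i<j\le m$, let $I\subseteq X_i$ be an independent set in $G$, and let $P := N(I)\cap X_j$. Then there exists $I'\subseteq I$ with $|I'|\le 2$ such that every vertex of $P$ has a neighbor in $I'$.
   Context: $N(v)$ denotes the open neighborhood of $v$ in $G$ and $N(I)=\bigcup_{v\in I}N(v)$. A graph is $P_5$-free if it has no induced path on 5 vertices. *)

theory Defs
  imports Main
begin

definition simple_graph :: "'a set \<Rightarrow> ('a \<Rightarrow> 'a \<Rightarrow> bool) \<Rightarrow> bool" where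
  "simple_graph V E \<longleftrightarrow> finite V \<and> (\<forall>u v. E u v \<longrightarrow> E v u)
     \<and> (\<forall>v. \<not> E v v) \<and> (\<forall>u v. E u v \<longrightarrow> u \<in> V \<and> v \<in> V)"

definition nbr :: "'a set \<Rightarrow> ('a \<Rightarrow> 'a \<Rightarrow> bool) \<Rightarrow> 'a \<Rightarrow> 'a set" where
  "nbr V E v = {u \<in> V. E v u}"

definition nbr_set :: "'a set \<Rightarrow> ('a \<Rightarrow> 'a \<Rightarrow> bool) \<Rightarrow> 'a set \<Rightarrow> 'a set" where
  "nbr_set V E I = (\<Union>v\<in>I. nbr V E v)"

definition independent :: "'a set \<Rightarrow> ('a \<Rightarrow> 'a \<Rightarrow> bool) \<Rightarrow> 'a set \<Rightarrow> bool" where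
  "independent V E I \<longleftrightarrow> I \<subseteq> V \<and> (\<forall>u\<in>I. \<forall>v\<in>I. \<not> E u v)"

definition induced_P5 :: "'a set \<Rightarrow> ('a \<Rightarrow> 'a \<Rightarrow> bool) \<Rightarrow> (nat \<Rightarrow> 'a) \<Rightarrow> bool" where
  "induced_P5 V E p \<longleftrightarrow> (\<forall>i<5. p i \<in> V) \<and> inj_on p {..<5}
     \<and> (\<forall>i<5. \<forall>j<5. E (p i) (p j) \<longleftrightarrow> (i = j + 1 \<or> j = i + 1))"

definition P5_free :: "'a set \<Rightarrow> ('a \<Rightarrow> 'a \<Rightarrow> bool) \<Rightarrow> bool" where
  "P5_free V E \<longleftrightarrow> \<not> (\<exists>p. induced_P5 V E p)"

text \<open>The sets X_i for D = {d 1, ..., d m}: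
  X_i = N(d_i) - (X_1 \<union> ... \<union> X_(i-1) \<union> D); X_0 is unused (empty).\<close>
function Xset :: "'a set \<Rightarrow> ('a \<Rightarrow> 'a \<Rightarrow> bool) \<Rightarrow> (nat \<Rightarrow> 'a) \<Rightarrow> 'a set \<Rightarrow> nat \<Rightarrow> 'a set" where
  "Xset V E d D i = (if i = 0 then {}
     else nbr V E (d i) - ((\<Union>k\<in>{1..<i}. Xset V E d D k) \<union> D))"
  by pat_completeness auto
termination by (relation "measure (\<lambda>(V,E,d,D,i). i)") auto

end

theory Submission
  imports Defs
begin

text \<open>Pass to an inclusion-minimal subset \<open>I'\<close> of \<open>I\<close> dominating \<open>P\<close>; by minimality every
  \<open>u \<in> I'\<close> has a private neighbour in \<open>P\<close>. All of \<open>I\<close> lies in \<open>N(d\<^sub>i)\<close>, whereas no vertex of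
  \<open>P \<subseteq> X\<^sub>j\<close> is adjacent to \<open>d\<^sub>i\<close>, since otherwise it would have been put into an earlier \<open>X\<^sub>k\<close>.
  If \<open>I'\<close> contained three vertices \<open>u\<^sub>1, u\<^sub>2, u\<^sub>3\<close> with private neighbours \<open>p\<^sub>2, p\<^sub>3\<close> of \<open>u\<^sub>2, u\<^sub>3\<close>,
  then \<open>p\<^sub>2 u\<^sub>2 d\<^sub>i u\<^sub>3 p\<^sub>3\<close> would be an induced \<open>P\<^sub>5\<close> when \<open>p\<^sub>2 p\<^sub>3\<close> is not an edge, and
  \<open>u\<^sub>1 d\<^sub>i u\<^sub>2 p\<^sub>2 p\<^sub>3\<close> would be one when it is.\<close>

declare Xset.simps[simp del]

lemma Xset_pos:
  "0 < i \<Longrightarrow> Xset V E d D i = nbr V E (d i) - ((\<Union>k\<in>{1..<i}. Xset V E d D k) \<union> D)"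
  by (subst Xset.simps) simp

lemma Xset_subset_nbr: "Xset V E d D i \<subseteq> nbr V E (d i) - D"
  by (subst Xset.simps) auto

lemma not_adj_Xset_later:
  assumes "0 < i" "i < j" "p \<in> Xset V E d D j"
  shows "\<not> E (d i) p"
proof
  assume "E (d i) p"
  moreover have "p \<in> V" "p \<notin> D" "p \<notin> (\<Union>k\<in>{1..<j}. Xset V E d D k)"
    using assms Xset_pos[of j V E d D] Xset_subset_nbr[of V E d D j] by (auto simp: nbr_def)
  ultimately have "p \<in> Xset V E d D i \<or> (\<exists>k\<in>{1..<i}. p \<in> Xset V E d D k)"
    using assms(1) Xset_pos[of i V E d D] by (auto simp: nbr_def)
  with \<open>p \<notin> (\<Union>k\<in>{1..<j}. Xset V E d D k)\<close> assms(1,2) show False by auto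
qed

lemma not_P5_free_if_induced_path:
  assumes "simple_graph V E"
    and "a0 \<in> V" "a1 \<in> V" "a2 \<in> V" "a3 \<in> V" "a4 \<in> V"
    and "distinct [a0, a1, a2, a3, a4]"
    and "E a0 a1" "E a1 a2" "E a2 a3" "E a3 a4"
    and "\<not> E a0 a2" "\<not> E a0 a3" "\<not> E a0 a4" "\<not> E a1 a3" "\<not> E a1 a4" "\<not> E a2 a4"
  shows "\<not> P5_free V E"
proof -
  have sym: "\<And>u v. E u v \<Longrightarrow> E v u" and irrefl: "\<And>v. \<not> E v v"
    using assms(1) by (auto simp: simple_graph_def)
  define p where "p = (!) [a0, a1, a2, a3, a4]"
  have less_5: "(\<forall>i<(5::nat). Q i) \<longleftrightarrow> Q 0 \<and> Q 1 \<and> Q 2 \<and> Q 3 \<and> Q 4" for Q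
    by (auto simp: less_Suc_eq numeral_eq_Suc)
  have "inj_on p {..<5}"
    using assms(7) by (auto intro!: inj_onI simp: p_def nth_eq_iff_index_eq simp del: distinct.simps)
  with assms have "induced_P5 V E p"
    unfolding induced_P5_def by (simp add: less_5 p_def irrefl) (metis sym)
  then show ?thesis by (auto simp: P5_free_def)
qed

lemma obtain_minimal_dominating_subset:
  assumes "finite I" and "\<forall>p\<in>P. \<exists>u\<in>I. R p u"
  obtains J where "J \<subseteq> I" "\<forall>p\<in>P. \<exists>u\<in>J. R p u"
    and "\<forall>u\<in>J. \<exists>p\<in>P. R p u \<and> (\<forall>w\<in>J - {u}. \<not> R p w)"
proof -
  define S where "S = {J. J \<subseteq> I \<and> (\<forall>p\<in>P. \<exists>u\<in>J. R p u)}"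
  obtain J where "J \<in> S" and min: "\<And>J'. J' \<in> S \<Longrightarrow> card J \<le> card J'"
    using ex_has_least_nat[of "\<lambda>J. J \<in> S" I card] assms(2) by (auto simp: S_def)
  then have "J \<subseteq> I" "\<forall>p\<in>P. \<exists>u\<in>J. R p u" by (auto simp: S_def)
  moreover have "\<exists>p\<in>P. R p u \<and> (\<forall>w\<in>J - {u}. \<not> R p w)" if "u \<in> J" for u
  proof (rule ccontr)
    assume "\<not> ?thesis"
    with \<open>\<forall>p\<in>P. \<exists>u\<in>J. R p u\<close> \<open>J \<subseteq> I\<close> have "J - {u} \<in> S"
      unfolding S_def by blast
    moreover have "card (J - {u}) < card J"
      using \<open>u \<in> J\<close> \<open>J \<subseteq> I\<close> assms(1) by (meson card_Diff1_less finite_subset)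
    ultimately show False using min by fastforce
  qed
  ultimately show ?thesis using that by blast
qed

lemma card_le_2_if_private_neighbours:
  assumes "simple_graph V E" "P5_free V E" "c \<in> V"
    and "independent V E J" "\<forall>u\<in>J. E c u"
    and "\<forall>p\<in>P. p \<in> V \<and> p \<noteq> c \<and> \<not> E c p"
    and private_nbr: "\<forall>u\<in>J. \<exists>p\<in>P. E p u \<and> (\<forall>w\<in>J - {u}. \<not> E p w)"
  shows "card J \<le> 2"
proof (rule ccontr)
  have sym: "\<And>u v. E u v \<Longrightarrow> E v u" and irrefl: "\<And>v. \<not> E v v"
    using assms(1) by (auto simp: simple_graph_def)
  assume "\<not> card J \<le> 2"
  then obtain T where "T \<subseteq> J" "card T = 3"
    by (metis card.infinite not_less_eq_eq numeral_3_eq_3 numeral_2_eq_2 obtain_subset_with_card_n zero_le)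
  then obtain u1 u2 u3 where u: "u1 \<in> J" "u2 \<in> J" "u3 \<in> J" "u1 \<noteq> u2" "u1 \<noteq> u3" "u2 \<noteq> u3"
    by (auto simp: card_3_iff)
  obtain p2 where p2: "p2 \<in> P" "E p2 u2" "\<not> E p2 u1" "\<not> E p2 u3"
    using private_nbr u by blast
  obtain p3 where p3: "p3 \<in> P" "E p3 u3" "\<not> E p3 u1" "\<not> E p3 u2"
    using private_nbr u by blast
  have facts: "u1 \<in> V" "u2 \<in> V" "u3 \<in> V" "E c u1" "E c u2" "E c u3"
    "\<not> E u1 u2" "\<not> E u2 u3" "\<not> E u1 u3"
    using u assms(4,5) by (auto simp: independent_def)
  have "p2 \<noteq> p3" using p2 p3 by blast
  show False
  proof (cases "E p2 p3")
    case True
    have "\<not> P5_free V E"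
      by (rule not_P5_free_if_induced_path[OF assms(1), of u1 c u2 p2 p3])
        (use facts p2 p3 True \<open>p2 \<noteq> p3\<close> assms(3,6) u in \<open>auto dest: sym\<close>)
    with assms(2) show False by contradiction
  next
    case False
    have "\<not> P5_free V E"
      by (rule not_P5_free_if_induced_path[OF assms(1), of p2 u2 c u3 p3])
        (use facts p2 p3 False \<open>p2 \<noteq> p3\<close> assms(3,6) u in \<open>auto dest: sym\<close>)
    with assms(2) show False by contradiction
  qed
qed

theorem claim3p2:
  fixes V :: "'a set" and E :: "'a \<Rightarrow> 'a \<Rightarrow> bool" and d :: "nat \<Rightarrow> 'a"
    and m i j :: nat and I :: "'a set"
  assumes "simple_graph V E"
    and "P5_free V E"
    and "\<forall>k\<in>{1..m}. d k \<in> V"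
    and "inj_on d {1..m}"
    and "1 \<le> i" and "i < j" and "j \<le> m"
    and "I \<subseteq> Xset V E d (d ` {1..m}) i"
    and "independent V E I"
  shows "\<exists>I' \<subseteq> I. finite I' \<and> card I' \<le> 2 \<and>
           (\<forall>p \<in> nbr_set V E I \<inter> Xset V E d (d ` {1..m}) j. \<exists>u \<in> I'. E p u)"
proof -
  let ?D = "d ` {1..m}" and ?P = "nbr_set V E I \<inter> Xset V E d (d ` {1..m}) j"
  have sym: "\<And>u v. E u v \<Longrightarrow> E v u" and "finite V"
    using assms(1) by (auto simp: simple_graph_def)
  have "I \<subseteq> V" using assms(9) by (simp add: independent_def)
  then have "finite I" using \<open>finite V\<close> by (rule finite_subset)
  have "\<forall>p\<in>?P. \<exists>u\<in>I. E p u" by (auto simp: nbr_set_def nbr_def dest: sym)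
  with \<open>finite I\<close> obtain J where J: "J \<subseteq> I" "\<forall>p\<in>?P. \<exists>u\<in>J. E p u"
    and private_nbr: "\<forall>u\<in>J. \<exists>p\<in>?P. E p u \<and> (\<forall>w\<in>J - {u}. \<not> E p w)"
    by (rule obtain_minimal_dominating_subset)
  have "independent V E J" using assms(9) J(1) by (auto simp: independent_def)
  moreover have "\<forall>u\<in>J. E (d i) u"
    using J(1) assms(8) Xset_subset_nbr[of V E d ?D i] by (auto simp: nbr_def)
  moreover have "\<forall>p\<in>?P. p \<in> V \<and> p \<noteq> d i \<and> \<not> E (d i) p"
    using Xset_subset_nbr[of V E d ?D j] not_adj_Xset_later[of i j] assms(5-7)
    by (fastforce simp: nbr_def)
  moreover have "d i \<in> V" using assms(3,5-7) by simp
  ultimately have "card J \<le> 2"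
    using card_le_2_if_private_neighbours[OF assms(1,2), of "d i" J ?P] private_nbr by blast
  moreover have "finite J" using J(1) \<open>finite I\<close> by (rule finite_subset)
  ultimately show ?thesis using J by blast
qed

end
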